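(* Let $G=(\mathcal{V},\mathcal{E})$ be a finite graph with $C\ge 2$ classes, in which every node $i$ has a true label $y_i\in\{1,\dots,C\}$ and degree $deg(i)\ge 1$; write $\mathcal{N}(i)$ for the set of neighbours of $i$. Each node $j$ carries a label vector $\hat{\mathbf{y}}_j\in[0,1]^C$ (the ground-truth one-hot label if $j$ is labeled, otherwise a model-predicted pseudo-label), and assume: (4) $\mathbb{E}[\hat{\mathbf{y}}_j\mid y_j]=(1-\epsilon)\mathbf{e}_{y_j}+\frac{\epsilon}{C-1}\sum_{k\ne y_j}\mathbf{e}_k$ for some $\epsilon\in(0,1)$, the vectors $\hat{\mathbf{y}}_j$ of distinct nodes being independent given the labels; (5) given $y_i$, the labels $\{y_j: j\in\mathcal{N}(i)\}$ of the neighbours of $i$ are conditionally independent, each equal to $y_i$ with probability $p$ and equal to any given class $c\ne y_i$ with probability $(1-p)/(C-1)$. Define the mixed label of node $i$ after one Mixup operation by $\bar{\mathbf{y}}_i=\sum_{j\in\mathcal{N}(i)}\frac{1}{deg(i)}\hat{\mathbf{y}}_j$. Then for any class $c$ and any node $i\in\mathcal{V}$ with $y_i=c$ (expectations and probabilities conditional on $y_i$), $$\mathbb{E}[\bar{\mathbf{y}}_i]=\Big[p(1-\epsilon)+\frac{\epsilon(1-p)}{C-1}\Big]\mathbf{e}_c+\Big[\frac{p\epsilon+(1-p)(1-\epsilon)}{C-1}+\frac{\epsilon(1-p)(C-2)}{(C-1)^2}\Big]\sum_{j\ne c}\mathbf{e}_j,$$ and for every $t>0$, $$\mathbb{P}\big(\|\bar{\mathbf{y}}_i-\mathbb{E}[\bar{\mathbf{y}}_i]\|_2\ge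 t\big)\le 2C\exp\!\Big(-\frac{deg(i)\,t^2}{2C}\Big).$$
   Context: $\mathbf{e}_c$ denotes the $c$-th standard basis vector of $\mathbb{R}^C$. The Mixup operation replaces a node's label vector by the average of its neighbours' label vectors. *)

theory Defs
  imports "HOL-Probability.Probability"
begin

definition nbrs :: "'v set \<Rightarrow> ('v \<Rightarrow> 'v \<Rightarrow> bool) \<Rightarrow> 'v \<Rightarrow> 'v set" where
  "nbrs V E i = {j \<in> V. E i j}"

definition deg :: "'v set \<Rightarrow> ('v \<Rightarrow> 'v \<Rightarrow> bool) \<Rightarrow> 'v \<Rightarrow> nat" where
  "deg V E i = card (nbrs V E i)"

definition basis_e :: "'c::finite \<Rightarrow> real ^ 'c" where
  "basis_e c = axis c 1"

definition cond_exp_given :: "'a measure \<Rightarrow> ('a \<Rightarrow> real ^ 'c::finite) \<Rightarrow> ('a \<Rightarrow> 'b) \<Rightarrow> 'b \<Rightarrow> real ^ 'c" where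
  "cond_exp_given M X Y k =
     (1 / measure M {\<omega> \<in> space M. Y \<omega> = k}) *\<^sub>R
     (\<integral>\<omega>. indicator {\<omega> \<in> space M. Y \<omega> = k} \<omega> *\<^sub>R X \<omega> \<partial>M)"

definition mixup :: "'v set \<Rightarrow> ('v \<Rightarrow> 'v \<Rightarrow> bool) \<Rightarrow> ('v \<Rightarrow> 'a \<Rightarrow> real ^ 'c::finite) \<Rightarrow> 'v \<Rightarrow> 'a \<Rightarrow> real ^ 'c" where
  "mixup V E Yhat i \<omega> = (\<Sum>j\<in>nbrs V E i. (1 / real (deg V E i)) *\<^sub>R Yhat j \<omega>)"

end

theory Submission
  imports Defs
begin

text \<open>
  Conditioning on the class of a neighbour j (law of total expectation), the mean of its label
  vector is the mixture of the noisy-label means (4) weighted by the class distribution (5);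
  this mixture is the claimed vector, and averaging over the neighbours preserves it.
  Each coordinate of the mixed label is the mean of deg(i) independent [0,1]-valued variables,
  so by Hoeffding's inequality it deviates from its expectation by at least t/sqrt C with
  probability at most 2 exp(-2 deg(i) t^2/C). A deviation of norm at least t forces such a
  coordinate deviation, and the union bound over the C coordinates gives
  2C exp(-2 deg(i) t^2/C), which is stronger than the claim.
\<close>

lemma (in prob_space) prob_scaleR_cond_exp_given:
  fixes X :: "'a \<Rightarrow> real ^ 'c"
  assumes "Y \<in> M \<rightarrow>\<^sub>M count_space UNIV"
  shows "prob {\<omega> \<in> space M. Y \<omega> = k} *\<^sub>R cond_exp_given M X Y k
           = (\<integral>\<omega>. indicator {\<omega> \<in> space M. Y \<omega> = k} \<omega> *\<^sub>R X \<omega> \<partial>M)"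
proof (cases "prob {\<omega> \<in> space M. Y \<omega> = k} = 0")
  case True
  have "{\<omega> \<in> space M. Y \<omega> = k} \<in> null_sets M"
    using True assms by (simp add: emeasure_eq_measure null_sets_def)
  then have "AE \<omega> in M. \<omega> \<notin> {\<omega> \<in> space M. Y \<omega> = k}"
    by (rule AE_not_in)
  then have "(\<integral>\<omega>. indicator {\<omega> \<in> space M. Y \<omega> = k} \<omega> *\<^sub>R X \<omega> \<partial>M) = 0"
    by (intro integral_eq_zero_AE) (auto elim: eventually_mono)
  with True show ?thesis
    by simp
qed (simp add: cond_exp_given_def)

lemma (in prob_space) expectation_eq_sum_cond_exp_given:
  fixes X :: "'a \<Rightarrow> real ^ 'c" and Y :: "'a \<Rightarrow> 'b::finite"
  assumes "Y \<in> M \<rightarrow>\<^sub>M count_space UNIV" and "integrable M X"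
  shows "expectation X = (\<Sum>k\<in>UNIV. prob {\<omega> \<in> space M. Y \<omega> = k} *\<^sub>R cond_exp_given M X Y k)"
proof -
  have "(\<Sum>k\<in>UNIV. indicator {\<omega> \<in> space M. Y \<omega> = k} \<omega> :: real) = 1" if "\<omega> \<in> space M" for \<omega>
    using that by (simp add: indicator_def)
  then have "expectation X = expectation (\<lambda>\<omega>. \<Sum>k\<in>UNIV. indicator {\<omega> \<in> space M. Y \<omega> = k} \<omega> *\<^sub>R X \<omega>)"
    by (intro Bochner_Integration.integral_cong) (simp_all add: scaleR_sum_left[symmetric])
  also have "\<dots> = (\<Sum>k\<in>UNIV. \<integral>\<omega>. indicator {\<omega> \<in> space M. Y \<omega> = k} \<omega> *\<^sub>R X \<omega> \<partial>M)"
    using assms by (intro Bochner_Integration.integral_sum integrable_mult_indicator) measurable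
  finally show ?thesis
    using assms(1) by (simp add: prob_scaleR_cond_exp_given)
qed

definition noisy_label_mean :: "real \<Rightarrow> 'c::finite \<Rightarrow> real ^ 'c" where
  "noisy_label_mean \<epsilon> k = (1 - \<epsilon>) *\<^sub>R basis_e k + (\<epsilon> / (CARD('c) - 1)) *\<^sub>R (\<Sum>l\<in>UNIV - {k}. basis_e l)"

definition mixed_label_mean :: "real \<Rightarrow> real \<Rightarrow> 'c::finite \<Rightarrow> real ^ 'c" where
  "mixed_label_mean p \<epsilon> c =
     (p * (1 - \<epsilon>) + \<epsilon> * (1 - p) / (CARD('c) - 1)) *\<^sub>R basis_e c
     + ((p * \<epsilon> + (1 - p) * (1 - \<epsilon>)) / (CARD('c) - 1)
        + \<epsilon> * (1 - p) * (CARD('c) - 2) / (CARD('c) - 1)^2) *\<^sub>R (\<Sum>j\<in>UNIV - {c}. basis_e j)"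

lemma noisy_label_mean_nth:
  "noisy_label_mean \<epsilon> (k::'c::finite) $ l = (if l = k then 1 - \<epsilon> else \<epsilon> / (CARD('c) - 1))"
  by (auto simp: noisy_label_mean_def basis_e_def axis_def)

lemma mixed_label_mean_nth:
  "mixed_label_mean p \<epsilon> (c::'c::finite) $ l =
           (if l = c then p * (1 - \<epsilon>) + \<epsilon> * (1 - p) / (CARD('c) - 1)
            else ((p * \<epsilon> + (1 - p) * (1 - \<epsilon>)) / (CARD('c) - 1)
                  + \<epsilon> * (1 - p) * (CARD('c) - 2) / (CARD('c) - 1)^2))"
  by (auto simp: mixed_label_mean_def basis_e_def axis_def)

lemma sum_scaleR_noisy_label_mean_nth:
  fixes m :: "'c::finite \<Rightarrow> real"
  assumes "sum m UNIV = 1"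
  shows "(\<Sum>k\<in>UNIV. m k *\<^sub>R noisy_label_mean \<epsilon> k) $ l
           = m l * (1 - \<epsilon>) + (1 - m l) * (\<epsilon> / (CARD('c) - 1))"
proof -
  have "(\<Sum>k\<in>UNIV. m k *\<^sub>R noisy_label_mean \<epsilon> k) $ l
          = m l * (1 - \<epsilon>) + (\<Sum>k\<in>UNIV - {l}. m k) * (\<epsilon> / (CARD('c) - 1))"
    by (simp add: noisy_label_mean_nth sum.remove[of UNIV l] sum_distrib_right sum_divide_distrib)
  also have "(\<Sum>k\<in>UNIV - {l}. m k) = 1 - m l"
    using assms by (simp add: sum_diff1)
  finally show ?thesis .
qed

lemma sum_label_prior_scaleR_noisy_label_mean:
  fixes m :: "'c::finite \<Rightarrow> real"
  assumes C2: "CARD('c) \<ge> 2" and mc: "m c = p" and mk: "\<And>k. k \<noteq> c \<Longrightarrow> m k = (1 - p) / (CARD('c) - 1)"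
  shows "(\<Sum>k\<in>UNIV. m k *\<^sub>R noisy_label_mean \<epsilon> k) = mixed_label_mean p \<epsilon> c"
proof -
  define d where "d = real CARD('c) - 1"
  have d: "real (CARD('c) - 1) = d" "real (CARD('c) - 2) = d - 1" "real ((CARD('c) - 1)\<^sup>2) = d\<^sup>2" "d \<noteq> 0"
    using C2 by (simp_all add: d_def)
  have "sum m UNIV = m c + (\<Sum>k\<in>UNIV - {c}. m k)"
    by (simp add: sum.remove)
  also have "(\<Sum>k\<in>UNIV - {c}. m k) = 1 - p"
    using mk d by (simp add: card_Diff_singleton)
  finally have "sum m UNIV = 1"
    using mc by simp
  show ?thesis
    unfolding vec_eq_iff
  proof
    fix l
    have "(\<Sum>k\<in>UNIV. m k *\<^sub>R noisy_label_mean \<epsilon> k) $ l = m l * (1 - \<epsilon>) + (1 - m l) * (\<epsilon> / d)"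
      using sum_scaleR_noisy_label_mean_nth[OF \<open>sum m UNIV = 1\<close>] d by simp
    also have "\<dots> = mixed_label_mean p \<epsilon> c $ l"
    proof (cases "l = c")
      case True
      then show ?thesis
        using mc d by (simp add: mixed_label_mean_nth field_simps)
    next
      case False
      have ml: "m l = (1 - p) / d"
        using mk[OF False] d by simp
      show ?thesis
        unfolding ml mixed_label_mean_nth d(1-3)
        using False d(4) by (simp add: field_simps power2_eq_square)
    qed
    finally show "(\<Sum>k\<in>UNIV. m k *\<^sub>R noisy_label_mean \<epsilon> k) $ l = mixed_label_mean p \<epsilon> c $ l" .
  qed
qed

lemma (in prob_space) expectation_noisy_label:
  fixes Y :: "'a \<Rightarrow> 'c::finite" and X :: "'a \<Rightarrow> real ^ 'c"
  assumes C2: "CARD('c) \<ge> 2" and Y: "Y \<in> M \<rightarrow>\<^sub>M count_space UNIV" and X: "integrable M X"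
    and prior_same: "prob {\<omega> \<in> space M. Y \<omega> = c} = p"
    and prior_other: "\<And>k. k \<noteq> c \<Longrightarrow> prob {\<omega> \<in> space M. Y \<omega> = k} = (1 - p) / (CARD('c) - 1)"
    and noise: "\<And>k. prob {\<omega> \<in> space M. Y \<omega> = k} > 0 \<Longrightarrow> cond_exp_given M X Y k = noisy_label_mean \<epsilon> k"
  shows "expectation X = mixed_label_mean p \<epsilon> c"
proof -
  have "prob {\<omega> \<in> space M. Y \<omega> = k} *\<^sub>R cond_exp_given M X Y k
          = prob {\<omega> \<in> space M. Y \<omega> = k} *\<^sub>R noisy_label_mean \<epsilon> k" for k
    using noise[of k] measure_nonneg[of M "{\<omega> \<in> space M. Y \<omega> = k}"]
    by (cases "prob {\<omega> \<in> space M. Y \<omega> = k} = 0") auto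
  then have "expectation X = (\<Sum>k\<in>UNIV. prob {\<omega> \<in> space M. Y \<omega> = k} *\<^sub>R noisy_label_mean \<epsilon> k)"
    unfolding expectation_eq_sum_cond_exp_given[OF Y X] by (simp only:)
  also have "\<dots> = mixed_label_mean p \<epsilon> c"
    using C2 prior_same prior_other by (rule sum_label_prior_scaleR_noisy_label_mean)
  finally show ?thesis .
qed

lemma (in prob_space) expectation_average:
  fixes X :: "'i \<Rightarrow> 'a \<Rightarrow> 'b::{banach, second_countable_topology}"
  assumes "finite N" and "N \<noteq> {}"
    and "\<And>j. j \<in> N \<Longrightarrow> integrable M (X j)" and "\<And>j. j \<in> N \<Longrightarrow> expectation (X j) = w"
  shows "expectation (\<lambda>\<omega>. \<Sum>j\<in>N. (1 / card N) *\<^sub>R X j \<omega>) = w"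
proof -
  have "expectation (\<lambda>\<omega>. \<Sum>j\<in>N. (1 / card N) *\<^sub>R X j \<omega>) = (\<Sum>j\<in>N. (1 / card N) *\<^sub>R w)"
    using assms by (simp add: Bochner_Integration.integral_sum)
  also have "\<dots> = w"
    using assms by (simp add: sum_constant_scaleR)
  finally show ?thesis .
qed

lemma integral_vec_nth:
  fixes f :: "'a \<Rightarrow> real ^ 'n"
  assumes "integrable M f"
  shows "(\<integral>\<omega>. f \<omega> \<partial>M) $ k = (\<integral>\<omega>. f \<omega> $ k \<partial>M)"
  using integral_bounded_linear[OF bounded_linear_vec_nth assms] by simp

lemma exists_abs_nth_ge_if_norm_ge:
  fixes x :: "real ^ 'n"
  assumes "t \<le> norm x"
  shows "\<exists>k. t / sqrt CARD('n) \<le> \<bar>x $ k\<bar>"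
proof (rule ccontr)
  define s where "s = t / sqrt CARD('n)"
  assume "\<not> ?thesis"
  then have lt: "\<bar>x $ k\<bar> < s" for k
    by (auto simp: s_def not_le)
  then have s: "s > 0"
    by (meson abs_ge_zero order_le_less_trans)
  have "(\<Sum>k\<in>UNIV. (x $ k)\<^sup>2) < (\<Sum>k\<in>(UNIV::'n set). s\<^sup>2)"
  proof (rule sum_strict_mono)
    fix k :: 'n
    have "\<bar>x $ k\<bar>\<^sup>2 < s\<^sup>2"
      using lt[of k] by (intro power_strict_mono) auto
    then show "(x $ k)\<^sup>2 < s\<^sup>2" by simp
  qed auto
  then have "norm x < sqrt (CARD('n) * s\<^sup>2)"
    unfolding norm_vec_def L2_set_def by (simp add: real_sqrt_less_mono)
  also have "\<dots> = t"
    using s by (simp add: real_sqrt_mult s_def zero_less_divide_iff)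
  finally show False
    using assms by simp
qed

lemma (in prob_space) integrable_unit_cube_valued:
  fixes X :: "'a \<Rightarrow> real ^ 'n"
  assumes "X \<in> borel_measurable M" and "\<And>\<omega> k. \<omega> \<in> space M \<Longrightarrow> X \<omega> $ k \<in> {0..1}"
  shows "integrable M X"
proof (rule integrable_const_bound[where B = "CARD('n)"])
  have "norm (X \<omega>) \<le> CARD('n)" if "\<omega> \<in> space M" for \<omega>
  proof -
    have "norm (X \<omega>) \<le> (\<Sum>k\<in>UNIV. \<bar>X \<omega> $ k\<bar>)"
      by (rule norm_le_l1_cart)
    also have "\<dots> \<le> (\<Sum>k\<in>(UNIV::'n set). 1)"
      using assms(2)[OF that] by (intro sum_mono) auto
    finally show ?thesis by simp
  qed
  then show "AE \<omega> in M. norm (X \<omega>) \<le> CARD('n)"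
    by (intro AE_I2)
qed (use assms(1) in simp)

lemma (in prob_space) Hoeffding_mean_abs_ge:
  fixes X :: "'i \<Rightarrow> 'a \<Rightarrow> real" and s :: real
  assumes "finite N" and "N \<noteq> {}" and "indep_vars (\<lambda>_. borel) X N"
    and "\<And>j \<omega>. j \<in> N \<Longrightarrow> \<omega> \<in> space M \<Longrightarrow> X j \<omega> \<in> {0..1}"
    and "s \<ge> 0"
  shows "prob {\<omega> \<in> space M. s \<le> \<bar>(\<Sum>j\<in>N. X j \<omega>) / card N - (\<Sum>j\<in>N. expectation (X j)) / card N\<bar>}
           \<le> 2 * exp (- 2 * real (card N) * s\<^sup>2)"
proof -
  let ?n = "real (card N)" and ?\<mu> = "\<Sum>j\<in>N. expectation (X j)"
  interpret Hoeffding_ineq M N X "\<lambda>_. 0" "\<lambda>_. 1" ?\<mu>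
    using assms by unfold_locales auto
  have n: "?n > 0"
    using assms by (simp add: card_gt_0_iff)
  have "{\<omega> \<in> space M. s \<le> \<bar>(\<Sum>j\<in>N. X j \<omega>) / ?n - ?\<mu> / ?n\<bar>}
          = {\<omega> \<in> space M. ?n * s \<le> \<bar>(\<Sum>j\<in>N. X j \<omega>) - ?\<mu>\<bar>}"
    using n by (simp add: diff_divide_distrib[symmetric] le_divide_eq mult.commute)
  also have "prob \<dots> \<le> 2 * exp (- 2 * (?n * s)\<^sup>2 / (\<Sum>j\<in>N. (1 - 0)\<^sup>2))"
    using n assms(5) by (intro Hoeffding_ineq_abs_ge) auto
  also have "- 2 * (?n * s)\<^sup>2 / (\<Sum>j\<in>N. (1 - 0)\<^sup>2) = - 2 * ?n * s\<^sup>2"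
    using n by (simp add: power2_eq_square)
  finally show ?thesis .
qed

lemma (in prob_space) prob_norm_mean_deviation_ge:
  fixes X :: "'i \<Rightarrow> 'a \<Rightarrow> real ^ 'n"
  assumes fin: "finite N" and ne: "N \<noteq> {}" and indep: "indep_vars (\<lambda>_. borel) X N"
    and unit: "\<And>j \<omega> k. j \<in> N \<Longrightarrow> \<omega> \<in> space M \<Longrightarrow> X j \<omega> $ k \<in> {0..1}"
    and t: "t > 0"
  defines "A \<equiv> \<lambda>\<omega>. \<Sum>j\<in>N. (1 / card N) *\<^sub>R X j \<omega>"
  shows "prob {\<omega> \<in> space M. t \<le> norm (A \<omega> - expectation A)}
           \<le> 2 * CARD('n) * exp (- 2 * real (card N) * t\<^sup>2 / CARD('n))"
proof -
  let ?n = "real (card N)"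
  define s where "s = t / sqrt CARD('n)"
  define B where "B k = {\<omega> \<in> space M. s \<le> \<bar>(\<Sum>j\<in>N. X j \<omega> $ k) / ?n
                          - (\<Sum>j\<in>N. expectation (\<lambda>\<omega>. X j \<omega> $ k)) / ?n\<bar>}" for k
  have X_meas [measurable]: "X j \<in> borel_measurable M" if "j \<in> N" for j
    using indep that unfolding indep_vars_def by auto
  have nth_meas [measurable]: "(\<lambda>x::real ^ 'n. x $ k) \<in> borel_measurable borel" for k
    by (intro borel_measurable_continuous_onI continuous_intros)
  have integrable: "integrable M (X j)" if "j \<in> N" for j
    using that unit by (intro integrable_unit_cube_valued) auto
  have A_nth: "A \<omega> $ k - expectation A $ k
      = (\<Sum>j\<in>N. X j \<omega> $ k) / ?n - (\<Sum>j\<in>N. expectation (\<lambda>\<omega>. X j \<omega> $ k)) / ?n" for \<omega> k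
  proof -
    have "expectation A = (\<Sum>j\<in>N. (1 / ?n) *\<^sub>R expectation (X j))"
      unfolding A_def using integrable by (simp add: Bochner_Integration.integral_sum)
    then show ?thesis
      using integrable by (simp add: A_def integral_vec_nth sum_divide_distrib)
  qed
  have "{\<omega> \<in> space M. t \<le> norm (A \<omega> - expectation A)} \<subseteq> (\<Union>k. B k)"
    using exists_abs_nth_ge_if_norm_ge by (fastforce simp: B_def s_def A_nth)
  moreover have B_sets: "B k \<in> sets M" for k
    unfolding B_def by measurable
  ultimately have "prob {\<omega> \<in> space M. t \<le> norm (A \<omega> - expectation A)} \<le> prob (\<Union>k. B k)"
    by (intro finite_measure_mono) auto
  also have "\<dots> \<le> (\<Sum>k\<in>UNIV. prob (B k))"
    using B_sets by (intro measure_UNION_le) auto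
  also have "\<dots> \<le> (\<Sum>k\<in>(UNIV::'n set). 2 * exp (- 2 * ?n * s\<^sup>2))"
  proof (intro sum_mono)
    fix k
    have "indep_vars (\<lambda>_. borel) (\<lambda>j \<omega>. X j \<omega> $ k) N"
      using indep_vars_compose2[OF indep, of "\<lambda>j x. x $ k" "\<lambda>_. borel"] by simp
    then show "prob (B k) \<le> 2 * exp (- 2 * ?n * s\<^sup>2)"
      unfolding B_def using fin ne unit t by (intro Hoeffding_mean_abs_ge) (auto simp: s_def)
  qed
  also have "\<dots> = 2 * CARD('n) * exp (- 2 * ?n * t\<^sup>2 / CARD('n))"
    by (simp add: s_def power_divide)
  finally show ?thesis .
qed

lemma (in prob_space) indep_vars_fst:
  assumes "indep_vars (\<lambda>_. M1 \<Otimes>\<^sub>M M2) (\<lambda>j \<omega>. (X j \<omega>, Z j \<omega>)) N"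
  shows "indep_vars (\<lambda>_. M1) X N"
  using indep_vars_compose2[OF assms, of "\<lambda>_. fst" "\<lambda>_. M1"] by (simp add: comp_def)

lemma (in prob_space) indep_vars_snd:
  assumes "indep_vars (\<lambda>_. M1 \<Otimes>\<^sub>M M2) (\<lambda>j \<omega>. (X j \<omega>, Z j \<omega>)) N"
  shows "indep_vars (\<lambda>_. M2) Z N"
  using indep_vars_compose2[OF assms, of "\<lambda>_. snd" "\<lambda>_. M2"] by (simp add: comp_def)

lemma mixup_eq_average:
  "mixup V E Yhat i = (\<lambda>\<omega>. \<Sum>j\<in>nbrs V E i. (1 / card (nbrs V E i)) *\<^sub>R Yhat j \<omega>)"
  by (simp add: fun_eq_iff mixup_def deg_def)

theorem theorem2:
  fixes M :: "'a measure"
    and V :: "'v set" and E :: "'v \<Rightarrow> 'v \<Rightarrow> bool"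
    and Y :: "'v \<Rightarrow> 'a \<Rightarrow> 'c::finite"
    and Yhat :: "'v \<Rightarrow> 'a \<Rightarrow> real ^ 'c"
    and \<epsilon> p :: real and i :: 'v and c :: 'c
  assumes C2: "CARD('c) \<ge> 2"
    and finV: "finite V"
    and sym: "\<And>u w. E u w \<Longrightarrow> E w u"
    and irrefl: "\<And>u. \<not> E u u"
    and deg_pos: "\<And>u. u \<in> V \<Longrightarrow> deg V E u \<ge> 1"
    and iV: "i \<in> V"
    and P: "prob_space M"
    and yi: "\<And>\<omega>. \<omega> \<in> space M \<Longrightarrow> Y i \<omega> = c"
    and Yhat_range: "\<And>j \<omega> k. j \<in> V \<Longrightarrow> \<omega> \<in> space M \<Longrightarrow> Yhat j \<omega> $ k \<in> {0..1}"
    and eps: "0 < \<epsilon>" "\<epsilon> < 1"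
    and p: "0 \<le> p" "p \<le> 1"
    and indep: "prob_space.indep_vars M (\<lambda>_. count_space UNIV \<Otimes>\<^sub>M borel)
                  (\<lambda>j \<omega>. (Y j \<omega>, Yhat j \<omega>)) (nbrs V E i)"
    and label_same: "\<And>j. j \<in> nbrs V E i \<Longrightarrow> measure M {\<omega> \<in> space M. Y j \<omega> = c} = p"
    and label_other: "\<And>j k. j \<in> nbrs V E i \<Longrightarrow> k \<noteq> c \<Longrightarrow>
                  measure M {\<omega> \<in> space M. Y j \<omega> = k} = (1 - p) / (CARD('c) - 1)"
    and noise: "\<And>j k. j \<in> nbrs V E i \<Longrightarrow> measure M {\<omega> \<in> space M. Y j \<omega> = k} > 0 \<Longrightarrow>
                  cond_exp_given M (Yhat j) (Y j) k
                    = (1 - \<epsilon>) *\<^sub>R basis_e k + (\<epsilon> / (CARD('c) - 1)) *\<^sub>R (\<Sum>l\<in>UNIV - {k}. basis_e l)"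
  shows "(\<integral>\<omega>. mixup V E Yhat i \<omega> \<partial>M)
           = (p * (1 - \<epsilon>) + \<epsilon> * (1 - p) / (CARD('c) - 1)) *\<^sub>R basis_e c
             + ((p * \<epsilon> + (1 - p) * (1 - \<epsilon>)) / (CARD('c) - 1)
                + \<epsilon> * (1 - p) * (CARD('c) - 2) / (CARD('c) - 1)^2) *\<^sub>R (\<Sum>j\<in>UNIV - {c}. basis_e j)
         \<and> (\<forall>t>0. measure M {\<omega> \<in> space M.
                 norm (mixup V E Yhat i \<omega> - (\<integral>\<omega>'. mixup V E Yhat i \<omega>' \<partial>M)) \<ge> t}
               \<le> 2 * CARD('c) * exp (- (real (deg V E i) * t^2) / (2 * CARD('c))))"
proof -
  interpret prob_space M
    by (rule P)
  let ?N = "nbrs V E i"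
  have fin: "finite ?N"
    using finV by (rule finite_subset[rotated]) (auto simp: nbrs_def)
  have nonempty: "?N \<noteq> {}"
    using deg_pos[OF iV] by (auto simp: deg_def)
  have Y_indep: "indep_vars (\<lambda>_. count_space UNIV) Y ?N"
    using indep by (rule indep_vars_fst)
  have Yhat_indep: "indep_vars (\<lambda>_. borel) Yhat ?N"
    using indep by (rule indep_vars_snd)
  have unit: "Yhat j \<omega> $ k \<in> {0..1}" if "j \<in> ?N" "\<omega> \<in> space M" for j \<omega> k
    using Yhat_range that by (auto simp: nbrs_def)
  have integrable: "integrable M (Yhat j)" if "j \<in> ?N" for j
    using Yhat_indep that unit unfolding indep_vars_def by (intro integrable_unit_cube_valued) auto
  have mean: "expectation (mixup V E Yhat i) = mixed_label_mean p \<epsilon> c"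
    unfolding mixup_eq_average
    using fin nonempty integrable Y_indep C2 label_same label_other noise
    by (intro expectation_average expectation_noisy_label) (auto simp: noisy_label_mean_def indep_vars_def)
  have tail: "prob {\<omega> \<in> space M. t \<le> norm (mixup V E Yhat i \<omega> - expectation (mixup V E Yhat i))}
                \<le> 2 * CARD('c) * exp (- (real (deg V E i) * t\<^sup>2) / (2 * CARD('c)))" if "t > 0" for t
  proof -
    have "prob {\<omega> \<in> space M. t \<le> norm (mixup V E Yhat i \<omega> - expectation (mixup V E Yhat i))}
            \<le> 2 * CARD('c) * exp (- 2 * real (card ?N) * t\<^sup>2 / CARD('c))"
      unfolding mixup_eq_average by (rule prob_norm_mean_deviation_ge[OF fin nonempty Yhat_indep unit that])
    also have "\<dots> \<le> 2 * CARD('c) * exp (- (real (deg V E i) * t\<^sup>2) / (2 * CARD('c)))"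
      unfolding deg_def by (intro mult_left_mono) (auto simp: field_simps)
    finally show ?thesis .
  qed
  show ?thesis
    using mean tail unfolding mixed_label_mean_def by simp
qed

end
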